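(* For $1\le j\le m$ and $a,b\in(\mathbb{Z}_n)^m$, put $\Gamma^j_{\chi_a}:=\chi_a\cdot\Gamma^j$. Then in $M_q(\mathfrak{g})$: - $\Delta(\Gamma^j_{\chi_a})=\chi_{a+\epsilon_j}\otimes\Gamma^j_{\chi_a}+\Gamma^j_{\chi_a}\otimes\chi_a$; - $\chi_a\cdot\Gamma^j_{\chi_b}=\prod_{i=1}^m\mathfrak{q}^{-c_{ij}a_i\lfloor\frac{b_j+1}{n}\rfloor}\Gamma^j_{\chi_{a+b}}$; - $\Gamma^j_{\chi_b}\cdot\chi_a=\prod_{i=1}^mq^{c_{ji}a_i}\Gamma^j_{\chi_{a+b}}$. Here $a+b$ is taken in $(\mathbb{Z}_n)^m$.
   Context: Notation and setting. $\mathbb{k}$ is an algebraically closed field of characteristic $0$. $(a_{ij})$ is an $m\times m$ Cartan matrix of finite type, and $d_i\in\{1,2,3\}$ are such that $c_{ij}=d_ia_{ij}$ is symmetric. $n\ge2$, $q$ is a primitive $n^2$-th root of unity in $\mathbb{k}$, $\mathfrak{q}=q^n$, and $l_i=\mathrm{ord}(q^{c_{ii}})$. $\lfloor\cdot\rfloor$ is the floor function, and elements of $(\mathbb{Z}_n)^m$ have entries in $\{0,\dots,n-1\}$; $\epsilon_j$ is the $j$-th standard vector. $A_q(\mathfrak{g})$ is the half small quasi-quantum group: the subalgebra generated by $h_i=g_i^n$ and $e_i$ of the Hopf algebra $H$ generated by commuting grouplikes $g_i$ ($g_i^{n^2}=1$) and $e_i$ with $g_ie_jg_i^{-1}=q^{\delta_{ij}}e_j$,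 $e_i^{l_i}=0$, the quantum Serre relations, and $\Delta(e_i)=e_i\otimes\prod_jg_j^{c_{ij}}+1\otimes e_i$, with quasi-Hopf structure inherited from a twist of $H$. Let $1_a$ be the idempotents of $\mathbb{k}\langle h_i\rangle$ with $1_ah_i=\mathfrak{q}^{a_i}1_a$, $1^i_k=\frac1n\sum_j\mathfrak{q}^{-kj}h_i^j$, $b_i=\sum_a\prod_jq^{-c_{ij}a_j}1_a$, and $H_i=\prod_jh_j^{c_{ij}}$. Its structure is: - $\Delta(h_i)=h_i\otimes h_i$; - $\Delta(e_i)=e_i\otimes b_i^{-1}+1\otimes\sum_{j=1}^{n-1}1^i_je_i+H_i^{-1}\otimes1^i_0e_i$; - $\phi=\sum_{a,b,c}\prod_{i,j}\mathfrak{q}^{-c_{ij}a_i\lfloor\frac{b_j+c_j}{n}\rfloor}1_a\otimes1_b\otimes1_c$. $M_q(\mathfrak{g})=A_q(\mathfrak{g})^*$ is the dual Majid algebra: - its coproduct is dual to the product of $A_q(\mathfrak{g})$; - its product is $(f\cdot g)(x)=\sum f(x_{(1)})g(x_{(2)})$; - its reassociator is $\Phi=\phi$ viewed as a functional, so $\Phi(\chi_a,\chi_b,\chi_c)=\prod_{s,t}\mathfrak{q}^{-c_{st}a_s\lfloor\frac{b_t+c_t}{n}\rfloor}$. $\chi_a$ ($a\in(\mathbb{Z}_n)^m$) is the algebra character of $A_q(\mathfrak{g})$ with $\chi_a(h_j)=\mathfrak{q}^{a_j}$ and $\chi_a(e_j)=0$; these are the grouplikes of $M_q(\mathfrak{g})$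 and $\chi_a\chi_b=\chi_{a+b}$; set $\chi_i=\chi_{\epsilon_i}$. Fix a homogeneous basis of $A_q(\mathfrak{g})$ ($\deg h_i=0$, $\deg e_i=1$) containing all $1_a$ and $1_ae_i$, and let $\Gamma^i=(1_{\epsilon_i}e_i)^*$ be the corresponding dual basis element. *)

theory Defs
  imports Main "HOL-Computational_Algebra.Polynomial"
begin

text \<open>Indices are 0-based: i ranges over {..<m}. A Cartan matrix is cA :: nat => nat => int,
  the symmetrizer is d :: nat => nat, and c_ij = d_i a_ij.\<close>

definition cartan_finite_type :: "nat \<Rightarrow> (nat \<Rightarrow> nat \<Rightarrow> int) \<Rightarrow> (nat \<Rightarrow> nat) \<Rightarrow> bool" where
  "cartan_finite_type m cA d \<longleftrightarrow>
     (\<forall>i<m. cA i i = 2) \<and>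
     (\<forall>i<m. \<forall>j<m. i \<noteq> j \<longrightarrow> cA i j \<le> 0) \<and>
     (\<forall>i<m. \<forall>j<m. cA i j = 0 \<longleftrightarrow> cA j i = 0) \<and>
     (\<forall>i<m. d i \<in> {1,2,3}) \<and>
     (\<forall>i<m. \<forall>j<m. int (d i) * cA i j = int (d j) * cA j i) \<and>
     (\<forall>x :: nat \<Rightarrow> real. (\<exists>i<m. x i \<noteq> 0) \<longrightarrow>
        0 < (\<Sum>i<m. \<Sum>j<m. x i * real_of_int (int (d i) * cA i j) * x j))"

definition cc :: "(nat \<Rightarrow> nat \<Rightarrow> int) \<Rightarrow> (nat \<Rightarrow> nat) \<Rightarrow> nat \<Rightarrow> nat \<Rightarrow> int" where
  "cc cA d i j = int (d i) * cA i j"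

definition primitive_root :: "'k::field \<Rightarrow> nat \<Rightarrow> bool" where
  "primitive_root q N \<longleftrightarrow> q ^ N = 1 \<and> (\<forall>k. 0 < k \<and> k < N \<longrightarrow> q ^ k \<noteq> 1)"

text \<open>(Z_n)^m: vectors with entries in {0..n-1} (and 0 outside the index range).\<close>
definition Zn :: "nat \<Rightarrow> nat \<Rightarrow> (nat \<Rightarrow> nat) set" where
  "Zn m n = {a. (\<forall>i<m. a i < n) \<and> (\<forall>i. m \<le> i \<longrightarrow> a i = 0)}"

definition vadd :: "nat \<Rightarrow> nat \<Rightarrow> (nat \<Rightarrow> nat) \<Rightarrow> (nat \<Rightarrow> nat) \<Rightarrow> (nat \<Rightarrow> nat)" where
  "vadd m n a b = (\<lambda>i. if i < m then (a i + b i) mod n else 0)"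

definition eps :: "nat \<Rightarrow> nat \<Rightarrow> nat" where
  "eps j = (\<lambda>i. if i = j then 1 else 0)"

text \<open>A is represented through a homogeneous basis indexed by a finite type 'b.
  Vectors of A (and functionals on A, i.e. elements of M = A^* ) are functions 'b => 'k;
  elements of A \<otimes> A (and of M \<otimes> M) are functions 'b \<times> 'b => 'k.
  mu x y z = coefficient of basis element z in the product x*y;
  dc x y z = coefficient of y \<otimes> z in Delta(x).\<close>

definition vec_of :: "'b \<Rightarrow> 'b \<Rightarrow> 'k::field" where
  "vec_of x = (\<lambda>y. if y = x then 1 else 0)"

definition mulv :: "('b::finite \<Rightarrow> 'b \<Rightarrow> 'b \<Rightarrow> 'k::field) \<Rightarrow> ('b \<Rightarrow> 'k) \<Rightarrow> ('b \<Rightarrow> 'k) \<Rightarrow> 'b \<Rightarrow> 'k" where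
  "mulv mu v w = (\<lambda>z. \<Sum>x\<in>UNIV. \<Sum>y\<in>UNIV. v x * w y * mu x y z)"

definition smulv :: "'k::field \<Rightarrow> ('b \<Rightarrow> 'k) \<Rightarrow> 'b \<Rightarrow> 'k" where
  "smulv c v = (\<lambda>x. c * v x)"

definition powv :: "('b::finite \<Rightarrow> 'b \<Rightarrow> 'b \<Rightarrow> 'k::field) \<Rightarrow> ('b \<Rightarrow> 'k) \<Rightarrow> ('b \<Rightarrow> 'k) \<Rightarrow> nat \<Rightarrow> 'b \<Rightarrow> 'k" where
  "powv mu one v k = ((mulv mu v) ^^ k) one"

definition tens :: "('b \<Rightarrow> 'k::field) \<Rightarrow> ('b \<Rightarrow> 'k) \<Rightarrow> 'b \<times> 'b \<Rightarrow> 'k" where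
  "tens v w = (\<lambda>(y, z). v y * w z)"

definition tmul :: "('b::finite \<Rightarrow> 'b \<Rightarrow> 'b \<Rightarrow> 'k::field) \<Rightarrow> ('b \<times> 'b \<Rightarrow> 'k) \<Rightarrow> ('b \<times> 'b \<Rightarrow> 'k) \<Rightarrow> 'b \<times> 'b \<Rightarrow> 'k" where
  "tmul mu T S = (\<lambda>(z, w). \<Sum>x\<in>UNIV. \<Sum>y\<in>UNIV. \<Sum>x'\<in>UNIV. \<Sum>y'\<in>UNIV.
      T (x, y) * S (x', y') * mu x x' z * mu y y' w)"

definition Dlv :: "('b::finite \<Rightarrow> 'b \<Rightarrow> 'b \<Rightarrow> 'k::field) \<Rightarrow> ('b \<Rightarrow> 'k) \<Rightarrow> 'b \<times> 'b \<Rightarrow> 'k" where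
  "Dlv dc v = (\<lambda>(y, z). \<Sum>x\<in>UNIV. v x * dc x y z)"

definition onev :: "nat \<Rightarrow> nat \<Rightarrow> ((nat \<Rightarrow> nat) \<Rightarrow> 'b) \<Rightarrow> 'b \<Rightarrow> 'k::field" where
  "onev m n I = (\<lambda>z. \<Sum>a\<in>Zn m n. vec_of (I a) z)"

definition idem1 :: "('b::finite \<Rightarrow> 'b \<Rightarrow> 'b \<Rightarrow> 'k::field) \<Rightarrow> nat \<Rightarrow> nat \<Rightarrow> ((nat \<Rightarrow> nat) \<Rightarrow> 'b)
     \<Rightarrow> 'k \<Rightarrow> (nat \<Rightarrow> 'b \<Rightarrow> 'k) \<Rightarrow> nat \<Rightarrow> nat \<Rightarrow> 'b \<Rightarrow> 'k" where
  "idem1 mu m n I q hv i k = (\<lambda>x. (1 / of_nat n) *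
      (\<Sum>j<n. (q ^ n) powi (- (int k * int j)) * powv mu (onev m n I) (hv i) j x))"

text \<open>b_i^{-1} = sum_a prod_j q^(c_ij a_j) 1_a  (the inverse of b_i = sum_a prod_j q^(-c_ij a_j) 1_a).\<close>
definition binv :: "nat \<Rightarrow> nat \<Rightarrow> (nat \<Rightarrow> nat \<Rightarrow> int) \<Rightarrow> (nat \<Rightarrow> nat) \<Rightarrow> 'k::field
     \<Rightarrow> ((nat \<Rightarrow> nat) \<Rightarrow> 'b) \<Rightarrow> nat \<Rightarrow> 'b \<Rightarrow> 'k" where
  "binv m n cA d q I i = (\<lambda>x. \<Sum>a\<in>Zn m n. (\<Prod>j<m. q powi (cc cA d i j * int (a j))) * vec_of (I a) x)"

text \<open>H_i^{-1} = prod_j h_j^(-c_ij); since h_j^n = 1 the exponent is taken mod n.\<close>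
definition Hinv :: "('b::finite \<Rightarrow> 'b \<Rightarrow> 'b \<Rightarrow> 'k::field) \<Rightarrow> nat \<Rightarrow> nat \<Rightarrow> (nat \<Rightarrow> nat \<Rightarrow> int) \<Rightarrow> (nat \<Rightarrow> nat)
     \<Rightarrow> ((nat \<Rightarrow> nat) \<Rightarrow> 'b) \<Rightarrow> (nat \<Rightarrow> 'b \<Rightarrow> 'k) \<Rightarrow> nat \<Rightarrow> 'b \<Rightarrow> 'k" where
  "Hinv mu m n cA d I hv i =
     foldr (mulv mu) (map (\<lambda>j. powv mu (onev m n I) (hv j) (nat ((- cc cA d i j) mod int n))) [0..<m])
       (onev m n I)"

text \<open>The structure of A_q(g) used in the paper, expressed in the chosen homogeneous basis:
  deg = degree of basis elements (deg h_i = 0, deg e_i = 1); I a = 1_a; E a i = 1_a e_i;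
  hv i = h_i; ev i = e_i.\<close>
definition Aq_model ::
  "nat \<Rightarrow> nat \<Rightarrow> (nat \<Rightarrow> nat \<Rightarrow> int) \<Rightarrow> (nat \<Rightarrow> nat) \<Rightarrow> 'k::field \<Rightarrow>
   ('b::finite \<Rightarrow> nat) \<Rightarrow> ('b \<Rightarrow> 'b \<Rightarrow> 'b \<Rightarrow> 'k) \<Rightarrow> ('b \<Rightarrow> 'b \<Rightarrow> 'b \<Rightarrow> 'k) \<Rightarrow>
   ((nat \<Rightarrow> nat) \<Rightarrow> 'b) \<Rightarrow> ((nat \<Rightarrow> nat) \<Rightarrow> nat \<Rightarrow> 'b) \<Rightarrow>
   (nat \<Rightarrow> 'b \<Rightarrow> 'k) \<Rightarrow> (nat \<Rightarrow> 'b \<Rightarrow> 'k) \<Rightarrow> bool" where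
  "Aq_model m n cA d q deg mu dc I E hv ev \<longleftrightarrow>
    (let Z = Zn m n; one = onev m n I; mul = mulv mu; qq = q ^ n in
     \<comment> \<open>the basis contains all 1_a and 1_a e_i, pairwise distinct\<close>
     inj_on I Z \<and> inj_on (\<lambda>(a, i). E a i) (Z \<times> {..<m}) \<and>
     (\<forall>a\<in>Z. \<forall>b\<in>Z. \<forall>i<m. I a \<noteq> E b i) \<and>
     \<comment> \<open>homogeneity: degree-0 part spanned by the 1_a, degree-1 part by the 1_a e_i\<close>
     {x. deg x = 0} = I ` Z \<and>
     {x. deg x = 1} = (\<lambda>(a, i). E a i) ` (Z \<times> {..<m}) \<and>
     \<comment> \<open>A is an associative unital graded algebra\<close>
     (\<forall>u v w. mul (mul u v) w = mul u (mul v w)) \<and>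
     (\<forall>v. mul one v = v \<and> mul v one = v) \<and>
     (\<forall>x y z. mu x y z \<noteq> 0 \<longrightarrow> deg z = deg x + deg y) \<and>
     \<comment> \<open>the 1_a are orthogonal idempotents of k<h_i> with 1_a h_i = qq^(a_i) 1_a\<close>
     (\<forall>a\<in>Z. \<forall>b\<in>Z. mul (vec_of (I a)) (vec_of (I b)) = (if a = b then vec_of (I a) else (\<lambda>_. 0))) \<and>
     (\<forall>a\<in>Z. \<forall>i<m. mul (vec_of (I a)) (hv i) = smulv (qq ^ a i) (vec_of (I a))) \<and>
     \<comment> \<open>the basis elements 1_a e_i\<close>
     (\<forall>a\<in>Z. \<forall>i<m. vec_of (E a i) = mul (vec_of (I a)) (ev i)) \<and>
     \<comment> \<open>h_i e_j h_i^{-1} = qq^(delta_ij) e_j  (from g_i e_j g_i^{-1} = q^(delta_ij) e_j)\<close>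
     (\<forall>i<m. \<forall>j<m. mul (hv i) (ev j) = smulv (qq ^ (if i = j then 1 else 0)) (mul (ev j) (hv i))) \<and>
     \<comment> \<open>the coproduct: graded unital algebra map with the given values on generators\<close>
     (\<forall>x y z. dc x y z \<noteq> 0 \<longrightarrow> deg y + deg z = deg x) \<and>
     (\<forall>v w. Dlv dc (mul v w) = tmul mu (Dlv dc v) (Dlv dc w)) \<and>
     Dlv dc one = tens one one \<and>
     (\<forall>i<m. Dlv dc (hv i) = tens (hv i) (hv i)) \<and>
     (\<forall>i<m. Dlv dc (ev i) =
        (\<lambda>p. tens (ev i) (binv m n cA d q I i) p
           + tens one (\<lambda>x. \<Sum>k\<in>{1..<n}. mul (idem1 mu m n I q hv i k) (ev i) x) p
           + tens (Hinv mu m n cA d I hv i) (mul (idem1 mu m n I q hv i 0) (ev i)) p)))"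

definition Mprod :: "('b::finite \<Rightarrow> 'b \<Rightarrow> 'b \<Rightarrow> 'k::field) \<Rightarrow> ('b \<Rightarrow> 'k) \<Rightarrow> ('b \<Rightarrow> 'k) \<Rightarrow> 'b \<Rightarrow> 'k" where
  "Mprod dc f g = (\<lambda>x. \<Sum>y\<in>UNIV. \<Sum>z\<in>UNIV. dc x y z * f y * g z)"

definition MDelta :: "('b::finite \<Rightarrow> 'b \<Rightarrow> 'b \<Rightarrow> 'k::field) \<Rightarrow> ('b \<Rightarrow> 'k) \<Rightarrow> 'b \<times> 'b \<Rightarrow> 'k" where
  "MDelta mu f = (\<lambda>(y, z). \<Sum>x\<in>UNIV. mu y z x * f x)"

text \<open>chi_a: the algebra character with chi_a(h_j) = qq^(a_j), chi_a(e_j) = 0. In the basis it is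
  the dual basis element 1_a^* (it is 1 on 1_a, 0 on 1_b for b \<noteq> a, and vanishes on the
  positive-degree part, which is the ideal generated by the e_j).\<close>
definition chi :: "((nat \<Rightarrow> nat) \<Rightarrow> 'b) \<Rightarrow> (nat \<Rightarrow> nat) \<Rightarrow> 'b \<Rightarrow> 'k::field" where
  "chi I a = vec_of (I a)"

definition Gam :: "((nat \<Rightarrow> nat) \<Rightarrow> nat \<Rightarrow> 'b) \<Rightarrow> nat \<Rightarrow> 'b \<Rightarrow> 'k::field" where
  "Gam E j = vec_of (E (eps j) j)"

definition GamChi :: "('b::finite \<Rightarrow> 'b \<Rightarrow> 'b \<Rightarrow> 'k::field) \<Rightarrow> ((nat \<Rightarrow> nat) \<Rightarrow> 'b)
    \<Rightarrow> ((nat \<Rightarrow> nat) \<Rightarrow> nat \<Rightarrow> 'b) \<Rightarrow> (nat \<Rightarrow> nat) \<Rightarrow> nat \<Rightarrow> 'b \<Rightarrow> 'k" where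
  "GamChi dc I E a j = Mprod dc (chi I a) (Gam E j)"

end

theory Submission
  imports Defs
begin

text \<open>The idempotents \<open>1\<^sub>a\<close> are told apart by the eigenvalues of the \<open>h\<^sub>k\<close>. Comparing
  eigenvalues in \<open>\<Delta>(1\<^sub>c h\<^sub>k) = \<Delta>(1\<^sub>c) (h\<^sub>k \<otimes> h\<^sub>k)\<close> and using \<open>\<Delta>(1) = 1 \<otimes> 1\<close> gives
  \<open>\<Delta>(1\<^sub>c) = \<Sum>\<^bsub>a+b=c\<^esub> 1\<^sub>a \<otimes> 1\<^sub>b\<close>; multiplying by \<open>\<Delta>(e\<^sub>i)\<close> gives the coproduct of the basis
  element \<open>1\<^sub>c e\<^sub>i\<close>, in which \<open>b\<^sub>i\<^sup>-\<^sup>1\<close>, the projections \<open>1\<^sup>i\<^sub>k\<close> (via a character sum over the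
  primitive \<open>n\<close>-th root \<open>q\<^sup>n\<close>) and \<open>H\<^sub>i\<^sup>-\<^sup>1\<close> act on each \<open>1\<^sub>a\<close> by explicit scalars. Reading off
  structure constants, \<open>\<Gamma>\<^sup>j\<^sub>\<chi>\<^sub>a\<close> is the dual basis element \<open>(1\<^bsub>a+\<epsilon>\<^sub>j\<^esub> e\<^sub>j)\<^sup>*\<close>, and the three
  identities become coefficients of \<open>\<Delta>(1\<^sub>c e\<^sub>i)\<close> and of the products \<open>1\<^sub>b \<cdot> 1\<^sub>c e\<^sub>i\<close> and
  \<open>1\<^sub>c e\<^sub>i \<cdot> 1\<^sub>b\<close>.\<close>

section \<open>Roots of unity\<close>

lemma primitive_root_nonzero:
  assumes "primitive_root w N" "0 < N"
  shows "w \<noteq> 0"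
  using assms by (auto simp: primitive_root_def power_0_left)

lemma primitive_root_pow_eq_iff:
  assumes w: "primitive_root w N" and N: "0 < N"
  shows "w ^ k = w ^ l \<longleftrightarrow> k mod N = l mod N"
proof -
  have pow_mod: "w ^ k = w ^ (k mod N)" for k
  proof -
    have "w ^ k = (w ^ N) ^ (k div N) * w ^ (k mod N)"
      by (simp flip: power_mult power_add)
    then show ?thesis using w by (simp add: primitive_root_def)
  qed
  have inj: "x = y" if "w ^ x = w ^ y" "y \<le> x" "x < N" for x y
  proof (rule ccontr)
    assume "x \<noteq> y"
    then have "w ^ (x - y) \<noteq> 1" using that w by (simp add: primitive_root_def)
    moreover have "w ^ x = w ^ y * w ^ (x - y)" using that(2) by (simp flip: power_add)
    ultimately show False using that(1) primitive_root_nonzero[OF w N] by auto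
  qed
  have "w ^ k = w ^ l \<longleftrightarrow> w ^ (k mod N) = w ^ (l mod N)" by (simp flip: pow_mod)
  also have "\<dots> \<longleftrightarrow> k mod N = l mod N"
    using inj[of "k mod N" "l mod N"] inj[of "l mod N" "k mod N"] N by (metis mod_less_divisor nat_le_linear)
  finally show ?thesis .
qed

lemma primitive_root_pow_of_square:
  assumes "primitive_root q (n ^ 2)" "0 < n"
  shows "primitive_root (q ^ n) n"
  unfolding primitive_root_def
proof (intro conjI allI impI)
  show "(q ^ n) ^ n = 1" using assms by (simp add: primitive_root_def power2_eq_square power_mult)
next
  fix k assume "0 < k \<and> k < n"
  then have "0 < n * k" "n * k < n ^ 2" using assms(2) by (simp_all add: power2_eq_square)
  then have "q ^ (n * k) \<noteq> 1" using assms(1) by (simp add: primitive_root_def)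
  then show "(q ^ n) ^ k \<noteq> 1" by (simp add: power_mult)
qed

lemma primitive_root_powi_mod:
  assumes w: "primitive_root w N" and N: "0 < N"
  shows "w powi t = w powi (t mod int N)"
proof -
  have w0: "w \<noteq> 0" using primitive_root_nonzero[OF w N] .
  have "w powi t = w powi (t mod int N) * (w powi int N) powi (t div int N)"
    by (metis w0 mod_mult_div_eq mult.commute power_int_add power_int_mult)
  then show ?thesis using w by (simp add: primitive_root_def)
qed

lemma primitive_root_character_sum:
  fixes w :: "'k::field_char_0"
  assumes w: "primitive_root w N" and a: "a < N" and k: "k < N"
  shows "1 / of_nat N * (\<Sum>j<N. w powi (- (int k * int j)) * w ^ (a * j)) = (if a = k then 1 else 0)"
proof -
  have N: "0 < N" using a by simp
  have w0: "w \<noteq> 0" using primitive_root_nonzero[OF w N] .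
  define z where "z = w ^ a * inverse (w ^ k)"
  have summand: "w powi (- (int k * int j)) * w ^ (a * j) = z ^ j" for j
  proof -
    have "w powi (- (int k * int j)) = inverse ((w ^ k) ^ j)"
      by (simp add: power_int_minus power_mult flip: of_nat_mult)
    then show ?thesis by (simp add: z_def power_mult_distrib power_inverse power_mult)
  qed
  have "z ^ N = (w ^ a) ^ N * inverse ((w ^ k) ^ N)"
    by (simp add: z_def power_mult_distrib power_inverse)
  also have "\<dots> = (w ^ N) ^ a * inverse ((w ^ N) ^ k)"
    by (simp add: mult.commute flip: power_mult)
  finally have zN: "z ^ N = 1" using w by (simp add: primitive_root_def)
  have "z = 1 \<longleftrightarrow> a = k"
    using primitive_root_pow_eq_iff[OF w N, of a k] a k w0 by (auto simp: z_def field_simps)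
  then show ?thesis
    using zN N by (auto simp: summand geometric_sum)
qed

lemma mult_if_0: "(c::'a::mult_zero) * (if P then x else 0) = (if P then c * x else 0)"
  by simp

lemma vec_of_mult: "vec_of x y * c = (if y = x then c else 0)"
  by (simp add: vec_of_def)

lemma mult_vec_of: "c * vec_of x y = (if y = x then c else 0)"
  by (simp add: vec_of_def)

lemma mulv_vec_of_left: "mulv mu (vec_of x) v z = (\<Sum>y\<in>UNIV. v y * mu x y z)"
  unfolding mulv_def by (simp only: mult.assoc flip: sum_distrib_left) (simp add: vec_of_mult)

lemma mulv_vec_of_vec_of: "mulv mu (vec_of x) (vec_of y) = mu x y"
  by (simp add: fun_eq_iff mulv_vec_of_left vec_of_mult)

lemma mulv_sum_left:
  "finite S \<Longrightarrow> mulv mu (\<lambda>x. \<Sum>s\<in>S. f s x) v = (\<lambda>z. \<Sum>s\<in>S. mulv mu (f s) v z)"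
  unfolding mulv_def by (rule ext) (simp add: sum_distrib_right sum.swap[of _ S])

lemma mulv_sum_right:
  "finite S \<Longrightarrow> mulv mu u (\<lambda>x. \<Sum>s\<in>S. f s x) = (\<lambda>z. \<Sum>s\<in>S. mulv mu u (f s) z)"
  unfolding mulv_def
  by (rule ext) (simp add: sum_distrib_left sum_distrib_right sum.swap[of _ _ S] mult_ac)

lemma mulv_smulv_left: "mulv mu (smulv c u) v = smulv c (mulv mu u v)"
  unfolding mulv_def smulv_def by (rule ext) (simp add: sum_distrib_left mult_ac)

lemma mulv_smulv_right: "mulv mu u (smulv c v) = smulv c (mulv mu u v)"
  unfolding mulv_def smulv_def by (rule ext) (simp add: sum_distrib_left mult_ac)

lemma mulv_zero_left: "mulv mu (\<lambda>_. 0) v = (\<lambda>_. 0)"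
  unfolding mulv_def by simp

lemma smulv_apply: "smulv c v x = c * v x"
  by (simp add: smulv_def)

lemma smulv_smulv: "smulv a (smulv b v) = smulv (a * b) v"
  by (simp add: smulv_def fun_eq_iff)

lemma Dlv_vec_of: "Dlv dc (vec_of x) = (\<lambda>(y, z). dc x y z)"
  unfolding Dlv_def by (rule ext) (auto simp: vec_of_mult)

lemma Dlv_sum: "finite S \<Longrightarrow> Dlv dc (\<lambda>x. \<Sum>s\<in>S. f s x) = (\<lambda>p. \<Sum>s\<in>S. Dlv dc (f s) p)"
  unfolding Dlv_def by (rule ext) (auto simp: sum_distrib_right intro: sum.swap)

lemma Dlv_smulv: "Dlv dc (smulv c v) = (\<lambda>p. c * Dlv dc v p)"
  unfolding Dlv_def smulv_def by (rule ext) (auto simp: sum_distrib_left mult_ac)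

lemma tmul_sum_tens:
  assumes "finite S"
  shows "tmul mu (\<lambda>(x, y). \<Sum>s\<in>S. f s x * g s y) (tens u v)
     = (\<lambda>(z, w). \<Sum>s\<in>S. mulv mu (f s) u z * mulv mu (g s) v w)"
proof (rule ext, clarify)
  fix z w
  define F where "F s x x' = f s x * u x' * mu x x' z" for s x x'
  define G where "G s y y' = g s y * v y' * mu y y' w" for s y y'
  have "tmul mu (\<lambda>(x, y). \<Sum>s\<in>S. f s x * g s y) (tens u v) (z, w)
      = (\<Sum>x\<in>UNIV. \<Sum>y\<in>UNIV. \<Sum>x'\<in>UNIV. \<Sum>y'\<in>UNIV. \<Sum>s\<in>S. F s x x' * G s y y')"
    unfolding tmul_def tens_def F_def G_def by (simp add: sum_distrib_left sum_distrib_right mult_ac)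
  also have "\<dots> = (\<Sum>s\<in>S. \<Sum>x\<in>UNIV. \<Sum>y\<in>UNIV. \<Sum>x'\<in>UNIV. \<Sum>y'\<in>UNIV. F s x x' * G s y y')"
    by (simp only: sum.swap[of _ S])
  also have "\<dots> = (\<Sum>s\<in>S. mulv mu (f s) u z * mulv mu (g s) v w)"
    unfolding mulv_def F_def G_def by (simp add: sum_product)
  finally show "tmul mu (\<lambda>(x, y). \<Sum>s\<in>S. f s x * g s y) (tens u v) (z, w)
      = (\<Sum>s\<in>S. mulv mu (f s) u z * mulv mu (g s) v w)" .
qed

lemma tmul_add3:
  "tmul mu T (\<lambda>p. S1 p + S2 p + S3 p) = (\<lambda>p. tmul mu T S1 p + tmul mu T S2 p + tmul mu T S3 p)"
  unfolding tmul_def by (rule ext) (auto simp: distrib_left distrib_right sum.distrib)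

lemma Mprod_vec_of: "Mprod dc (vec_of u) (vec_of v) x = dc x u v"
  unfolding Mprod_def by (simp add: mult_vec_of)

lemma MDelta_vec_of: "MDelta mu (vec_of w) (y, z) = mu y z w"
  unfolding MDelta_def by (simp add: mult_vec_of)

lemma vadd_commute: "vadd m n a b = vadd m n b a"
  by (simp add: vadd_def add.commute fun_eq_iff)

lemma vadd_assoc: "vadd m n (vadd m n a b) c = vadd m n a (vadd m n b c)"
  by (simp add: vadd_def fun_eq_iff mod_add_left_eq mod_add_right_eq add.assoc)

lemma vadd_in_Zn: "0 < n \<Longrightarrow> vadd m n a b \<in> Zn m n"
  by (simp add: vadd_def Zn_def)

lemma eps_in_Zn: "j < m \<Longrightarrow> 2 \<le> n \<Longrightarrow> eps j \<in> Zn m n"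
  by (simp add: eps_def Zn_def)

section \<open>The algebra \<open>A\<^sub>q(g)\<close> in its homogeneous basis\<close>

locale Aq_model_setting =
  fixes m n :: nat and cA :: "nat \<Rightarrow> nat \<Rightarrow> int" and d :: "nat \<Rightarrow> nat"
    and q :: "'k::field_char_0" and deg :: "'b::finite \<Rightarrow> nat"
    and mu dc :: "'b \<Rightarrow> 'b \<Rightarrow> 'b \<Rightarrow> 'k"
    and I :: "(nat \<Rightarrow> nat) \<Rightarrow> 'b" and E :: "(nat \<Rightarrow> nat) \<Rightarrow> nat \<Rightarrow> 'b"
    and hv ev :: "nat \<Rightarrow> 'b \<Rightarrow> 'k"
  assumes n_ge_2: "2 \<le> n"
    and q_primitive: "primitive_root q (n ^ 2)"
    and I_inj: "inj_on I (Zn m n)"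
    and E_inj: "inj_on (\<lambda>(a, i). E a i) (Zn m n \<times> {..<m})"
    and I_neq_E: "\<And>a b i. a \<in> Zn m n \<Longrightarrow> b \<in> Zn m n \<Longrightarrow> i < m \<Longrightarrow> I a \<noteq> E b i"
    and deg_0_eq: "{x. deg x = 0} = I ` Zn m n"
    and deg_1_eq: "{x. deg x = 1} = (\<lambda>(a, i). E a i) ` (Zn m n \<times> {..<m})"
    and mul_assoc: "\<And>u v w. mulv mu (mulv mu u v) w = mulv mu u (mulv mu v w)"
    and mul_one_left: "\<And>v. mulv mu (onev m n I) v = v"
    and mul_one_right: "\<And>v. mulv mu v (onev m n I) = v"
    and mu_deg: "\<And>x y z. mu x y z \<noteq> 0 \<Longrightarrow> deg z = deg x + deg y"
    and I_mul_I: "\<And>a b. a \<in> Zn m n \<Longrightarrow> b \<in> Zn m n \<Longrightarrow>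
      mulv mu (vec_of (I a)) (vec_of (I b)) = (if a = b then vec_of (I a) else (\<lambda>_. 0))"
    and I_mul_h: "\<And>a k. a \<in> Zn m n \<Longrightarrow> k < m \<Longrightarrow>
      mulv mu (vec_of (I a)) (hv k) = smulv ((q ^ n) ^ a k) (vec_of (I a))"
    and vec_of_E: "\<And>a i. a \<in> Zn m n \<Longrightarrow> i < m \<Longrightarrow> vec_of (E a i) = mulv mu (vec_of (I a)) (ev i)"
    and h_mul_e: "\<And>k i. k < m \<Longrightarrow> i < m \<Longrightarrow>
      mulv mu (hv k) (ev i) = smulv ((q ^ n) ^ (if k = i then 1 else 0)) (mulv mu (ev i) (hv k))"
    and dc_deg: "\<And>x y z. dc x y z \<noteq> 0 \<Longrightarrow> deg y + deg z = deg x"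
    and Dlv_mul: "\<And>v w. Dlv dc (mulv mu v w) = tmul mu (Dlv dc v) (Dlv dc w)"
    and Dlv_one: "Dlv dc (onev m n I) = tens (onev m n I) (onev m n I)"
    and Dlv_h: "\<And>k. k < m \<Longrightarrow> Dlv dc (hv k) = tens (hv k) (hv k)"
    and Dlv_e: "\<And>i. i < m \<Longrightarrow> Dlv dc (ev i) =
      (\<lambda>p. tens (ev i) (binv m n cA d q I i) p
         + tens (onev m n I) (\<lambda>x. \<Sum>k\<in>{1..<n}. mulv mu (idem1 mu m n I q hv i k) (ev i) x) p
         + tens (Hinv mu m n cA d I hv i) (mulv mu (idem1 mu m n I q hv i 0) (ev i)) p)"

lemma Aq_model_setting_if_Aq_model:
  assumes "Aq_model m n cA d q deg mu dc I E hv ev" "2 \<le> n" "primitive_root q (n ^ 2)"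
  shows "Aq_model_setting m n cA d q deg mu dc I E hv ev"
  using assms unfolding Aq_model_def Let_def by unfold_locales auto

context Aq_model_setting
begin

abbreviation "Z \<equiv> Zn m n"
abbreviation "qq \<equiv> q ^ n"
abbreviation "mul \<equiv> mulv mu"
abbreviation "one \<equiv> onev m n I"

lemma n_pos: "0 < n" using n_ge_2 by simp

lemma qq_primitive: "primitive_root qq n"
  using primitive_root_pow_of_square[OF q_primitive n_pos] .

lemma q_nonzero: "q \<noteq> 0"
  using primitive_root_nonzero[OF q_primitive] n_pos by simp

lemma qq_pow_eq_iff: "qq ^ s = qq ^ t \<longleftrightarrow> s mod n = t mod n"
  using primitive_root_pow_eq_iff[OF qq_primitive n_pos] .

lemma finite_Z: "finite Z"
  using I_inj by (rule finite_imageD[rotated]) simp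

lemma vadd_in_Z: "vadd m n a b \<in> Z" using vadd_in_Zn[OF n_pos] .

lemma eps_in_Z: "j < m \<Longrightarrow> eps j \<in> Z" using eps_in_Zn n_ge_2 by blast

lemma vadd_eqI:
  assumes "a \<in> Z" "b \<in> Z" "c \<in> Z" and "\<And>k. k < m \<Longrightarrow> qq ^ c k = qq ^ (a k + b k)"
  shows "vadd m n a b = c"
proof (rule ext)
  fix k
  show "vadd m n a b k = c k"
    using assms qq_pow_eq_iff by (cases "k < m") (auto simp: vadd_def Zn_def)
qed

lemma vadd_right_cancel:
  assumes a: "a \<in> Z" and b: "b \<in> Z" and eq: "vadd m n a c = vadd m n b c"
  shows "a = b"
proof -
  have "qq ^ (a k + c k) = qq ^ (b k + c k)" if "k < m" for k
    using fun_cong[OF eq, of k] that qq_pow_eq_iff by (simp add: vadd_def)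
  then have "qq ^ a k = qq ^ b k" if "k < m" for k
    using that q_nonzero by (simp add: power_add)
  then have mod_eq: "a k mod n = b k mod n" if "k < m" for k
    using that qq_pow_eq_iff by blast
  show ?thesis
  proof
    fix k
    show "a k = b k" using a b mod_eq[of k] by (cases "k < m") (simp_all add: Zn_def)
  qed
qed

lemma I_mul_I_apply:
  "a \<in> Z \<Longrightarrow> b \<in> Z \<Longrightarrow> mul (vec_of (I a)) (vec_of (I b)) z = (if a = b then vec_of (I a) z else 0)"
  by (simp add: I_mul_I)

lemma vec_of_I_I: "a \<in> Z \<Longrightarrow> b \<in> Z \<Longrightarrow> vec_of (I a) (I b) = (if a = b then 1 else 0)"
  using I_inj by (auto simp: vec_of_def inj_on_def)

lemma vec_of_E_E: "a \<in> Z \<Longrightarrow> b \<in> Z \<Longrightarrow> i < m \<Longrightarrow> k < m \<Longrightarrow>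
    vec_of (E a i) (E b k) = (if a = b \<and> i = k then 1 else 0)"
  using E_inj by (auto simp: vec_of_def inj_on_def)

lemma vec_of_I_E: "a \<in> Z \<Longrightarrow> b \<in> Z \<Longrightarrow> i < m \<Longrightarrow> vec_of (I a) (E b i) = 0"
  using I_neq_E[of a b i] by (auto simp: vec_of_def)

lemma vec_of_E_I: "a \<in> Z \<Longrightarrow> b \<in> Z \<Longrightarrow> i < m \<Longrightarrow> vec_of (E b i) (I a) = 0"
  using I_neq_E[of a b i] by (simp add: vec_of_def)

lemma deg_I: "a \<in> Z \<Longrightarrow> deg (I a) = 0" using deg_0_eq by blast
lemma deg_E: "a \<in> Z \<Longrightarrow> i < m \<Longrightarrow> deg (E a i) = 1" using deg_1_eq by blast
lemma deg_0_imp: "deg x = 0 \<Longrightarrow> \<exists>a\<in>Z. x = I a" using deg_0_eq by blast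
lemma deg_1_imp: "deg x = 1 \<Longrightarrow> \<exists>a\<in>Z. \<exists>i<m. x = E a i"
  using deg_1_eq by (auto simp: set_eq_iff)

lemma dc_nonzero_imp_E:
  "dc x y z \<noteq> 0 \<Longrightarrow> deg y + deg z = 1 \<Longrightarrow> \<exists>c\<in>Z. \<exists>i<m. x = E c i"
  using dc_deg deg_1_imp by metis

lemma onev_I: "a \<in> Z \<Longrightarrow> one (I a) = 1"
  using finite_Z by (simp add: onev_def vec_of_I_I if_distrib cong: if_cong)

lemma h_mul_I:
  assumes k: "k < m" and b: "b \<in> Z"
  shows "mul (hv k) (vec_of (I b)) = smulv (qq ^ b k) (vec_of (I b))"
proof -
  have "mul (hv k) (vec_of (I b)) = mul (mul one (hv k)) (vec_of (I b))"
    by (simp add: mul_one_left)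
  also have "\<dots> = (\<lambda>z. \<Sum>a\<in>Z. mul (smulv (qq ^ a k) (vec_of (I a))) (vec_of (I b)) z)"
    using k by (simp add: onev_def mulv_sum_left finite_Z I_mul_h)
  also have "\<dots> = (\<lambda>z. \<Sum>a\<in>Z. if a = b then smulv (qq ^ b k) (vec_of (I b)) z else 0)"
    using b by (intro ext sum.cong) (simp_all add: mulv_smulv_left smulv_apply I_mul_I_apply)
  finally show ?thesis using b finite_Z by simp
qed

lemma I_mul_hpow:
  assumes k: "k < m" and a: "a \<in> Z"
  shows "mul (vec_of (I a)) (powv mu one (hv k) j) = smulv (qq ^ (a k * j)) (vec_of (I a))"
proof (induction j)
  case 0
  then show ?case by (simp add: powv_def mul_one_right smulv_def)
next
  case (Suc j)
  have "mul (vec_of (I a)) (powv mu one (hv k) (Suc j))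
      = mul (mul (vec_of (I a)) (hv k)) (powv mu one (hv k) j)"
    by (simp add: powv_def mul_assoc)
  also have "\<dots> = smulv (qq ^ a k) (smulv (qq ^ (a k * j)) (vec_of (I a)))"
    using Suc k a by (simp add: I_mul_h mulv_smulv_left)
  finally show ?case by (simp add: smulv_smulv power_add[symmetric] add.commute)
qed

lemma I_mul_idem1:
  assumes a: "a \<in> Z" and i: "i < m" and k: "k < n"
  shows "mul (vec_of (I a)) (idem1 mu m n I q hv i k) = (if a i = k then vec_of (I a) else (\<lambda>_. 0))"
proof -
  have idem1_eq: "idem1 mu m n I q hv i k = smulv (1 / of_nat n)
      (\<lambda>x. \<Sum>j<n. smulv (qq powi (- (int k * int j))) (powv mu one (hv i) j) x)"
    by (simp add: idem1_def smulv_def fun_eq_iff)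
  have "mul (vec_of (I a)) (idem1 mu m n I q hv i k)
      = smulv (1 / of_nat n * (\<Sum>j<n. qq powi (- (int k * int j)) * qq ^ (a i * j))) (vec_of (I a))"
    unfolding idem1_eq
    by (simp add: mulv_smulv_right mulv_sum_right I_mul_hpow[OF i a])
      (simp add: smulv_def fun_eq_iff sum_distrib_left sum_distrib_right sum_divide_distrib mult_ac)
  also have "\<dots> = smulv (if a i = k then 1 else 0) (vec_of (I a))"
    using a i by (simp only: primitive_root_character_sum[OF qq_primitive _ k] Zn_def mem_Collect_eq)
  finally show ?thesis by (simp add: smulv_def fun_eq_iff)
qed

definition binv_coeff :: "nat \<Rightarrow> (nat \<Rightarrow> nat) \<Rightarrow> 'k" where
  "binv_coeff i a = (\<Prod>k<m. q powi (cc cA d i k * int (a k)))"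

definition Hinv_coeff :: "nat \<Rightarrow> (nat \<Rightarrow> nat) \<Rightarrow> 'k" where
  "Hinv_coeff i a = (\<Prod>k<m. qq powi (- cc cA d i k * int (a k)))"

lemma I_mul_binv:
  assumes a: "a \<in> Z"
  shows "mul (vec_of (I a)) (binv m n cA d q I i) = smulv (binv_coeff i a) (vec_of (I a))"
proof -
  have binv_eq: "binv m n cA d q I i = (\<lambda>x. \<Sum>b\<in>Z. smulv (binv_coeff i b) (vec_of (I b)) x)"
    by (simp add: binv_def binv_coeff_def smulv_def)
  show ?thesis
    unfolding binv_eq mulv_sum_right[OF finite_Z] mulv_smulv_right
    using a finite_Z by (intro ext) (simp add: smulv_apply I_mul_I_apply mult_if_0)
qed

lemma I_mul_foldr:
  assumes a: "a \<in> Z"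
    and f: "\<And>k. k \<in> set ks \<Longrightarrow> mul (vec_of (I a)) (f k) = smulv (\<alpha> k) (vec_of (I a))"
  shows "mul (vec_of (I a)) (foldr mul (map f ks) one) = smulv (prod_list (map \<alpha> ks)) (vec_of (I a))"
  using f
proof (induction ks)
  case Nil
  then show ?case by (simp add: mul_one_right smulv_def)
next
  case (Cons k ks)
  have "mul (vec_of (I a)) (foldr mul (map f (k # ks)) one)
      = mul (mul (vec_of (I a)) (f k)) (foldr mul (map f ks) one)"
    by (simp add: mul_assoc)
  also have "\<dots> = smulv (\<alpha> k) (smulv (prod_list (map \<alpha> ks)) (vec_of (I a)))"
    using Cons by (simp add: mulv_smulv_left)
  finally show ?case by (simp add: smulv_smulv)
qed

lemma I_mul_Hinv:
  assumes a: "a \<in> Z"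
  shows "mul (vec_of (I a)) (Hinv mu m n cA d I hv i) = smulv (Hinv_coeff i a) (vec_of (I a))"
proof -
  have "qq ^ (a k * nat (- cc cA d i k mod int n)) = qq powi (- cc cA d i k * int (a k))" for k
  proof -
    let ?t = "- cc cA d i k mod int n"
    have "qq ^ (a k * nat ?t) = qq powi (int (nat ?t) * int (a k))"
      by (simp only: power_int_of_nat[symmetric] of_nat_mult mult.commute)
    also have "\<dots> = (qq powi ?t) powi int (a k)"
      using n_pos by (simp add: power_int_mult)
    also have "\<dots> = (qq powi (- cc cA d i k)) powi int (a k)"
      by (simp flip: primitive_root_powi_mod[OF qq_primitive n_pos])
    also have "\<dots> = qq powi (- cc cA d i k * int (a k))"
      by (rule power_int_mult[symmetric])
    finally show ?thesis .
  qed
  then have "prod_list (map (\<lambda>k. qq ^ (a k * nat (- cc cA d i k mod int n))) [0..<m]) = Hinv_coeff i a"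
    by (simp add: Hinv_coeff_def prod.distinct_set_conv_list[symmetric] atLeast0LessThan)
  moreover have "mul (vec_of (I a)) (Hinv mu m n cA d I hv i)
      = smulv (prod_list (map (\<lambda>k. qq ^ (a k * nat (- cc cA d i k mod int n))) [0..<m])) (vec_of (I a))"
    unfolding Hinv_def by (rule I_mul_foldr[OF a]) (simp add: I_mul_hpow a)
  ultimately show ?thesis by simp
qed

lemma I_mul_E:
  assumes "b \<in> Z" "c \<in> Z" "i < m"
  shows "mul (vec_of (I b)) (vec_of (E c i)) = (if b = c then vec_of (E c i) else (\<lambda>_. 0))"
  using assms by (simp add: vec_of_E I_mul_I mulv_zero_left flip: mul_assoc)

text \<open>Both \<open>h\<^sub>k\<close>-eigenvalues of \<open>1\<^sub>c e\<^sub>i 1\<^sub>b\<close>, read off from the right and through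
  \<open>e\<^sub>i h\<^sub>k = q\<^sup>-\<^sup>n\<^sup>\<delta> h\<^sub>k e\<^sub>i\<close>, must agree unless the product vanishes.\<close>
lemma E_mul_I_nonzero:
  assumes c: "c \<in> Z" and i: "i < m" and b: "b \<in> Z"
    and nz: "mul (vec_of (E c i)) (vec_of (I b)) z \<noteq> 0"
  shows "vadd m n b (eps i) = c"
proof (rule vadd_eqI[OF b eps_in_Z[OF i] c])
  let ?X = "mul (vec_of (E c i)) (vec_of (I b))"
  fix k assume k: "k < m"
  have E_mul_h: "smulv (qq ^ eps i k) (mul (vec_of (E c i)) (hv k)) = smulv (qq ^ c k) (vec_of (E c i))"
  proof -
    have "smulv (qq ^ eps i k) (mul (vec_of (E c i)) (hv k))
        = mul (vec_of (I c)) (smulv (qq ^ eps i k) (mul (ev i) (hv k)))"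
      using c i by (simp add: vec_of_E mul_assoc mulv_smulv_right)
    also have "\<dots> = mul (mul (vec_of (I c)) (hv k)) (ev i)"
      using k i by (simp add: h_mul_e mul_assoc eps_def)
    finally show ?thesis using c i k by (simp add: I_mul_h mulv_smulv_left vec_of_E)
  qed
  have "smulv (qq ^ eps i k) (smulv (qq ^ b k) ?X) = smulv (qq ^ eps i k) (mul ?X (hv k))"
    using k b by (simp add: mul_assoc I_mul_h mulv_smulv_right)
  also have "\<dots> = mul (smulv (qq ^ eps i k) (mul (vec_of (E c i)) (hv k))) (vec_of (I b))"
    using k b by (simp add: mul_assoc I_mul_h h_mul_I mulv_smulv_left)
  also have "\<dots> = smulv (qq ^ c k) ?X"
    by (simp add: E_mul_h mulv_smulv_left)
  finally have "smulv (qq ^ (b k + eps i k)) ?X z = smulv (qq ^ c k) ?X z"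
    by (simp add: smulv_smulv power_add mult_ac)
  then show "qq ^ c k = qq ^ (b k + eps i k)" using nz by (simp add: smulv_apply)
qed

lemma E_mul_I:
  assumes c: "c \<in> Z" and i: "i < m" and b: "b \<in> Z"
  shows "mul (vec_of (E c i)) (vec_of (I b)) = (if vadd m n b (eps i) = c then vec_of (E c i) else (\<lambda>_. 0))"
proof (cases "vadd m n b (eps i) = c")
  case False
  then show ?thesis using E_mul_I_nonzero[OF c i b] by auto
next
  case True
  have "mul (vec_of (E c i)) (vec_of (I b')) z = 0" if "b' \<in> Z" "b' \<noteq> b" for b' z
    using E_mul_I_nonzero[OF c i \<open>b' \<in> Z\<close>] True vadd_right_cancel[OF \<open>b' \<in> Z\<close> b] that by auto
  then have "(\<Sum>b'\<in>Z. mul (vec_of (E c i)) (vec_of (I b')) z) = mul (vec_of (E c i)) (vec_of (I b)) z" for z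
    using b finite_Z by (intro sum.mono_neutral_right[of Z "{b}", simplified]) auto
  then have "mul (vec_of (E c i)) one = mul (vec_of (E c i)) (vec_of (I b))"
    by (simp add: onev_def mulv_sum_right finite_Z)
  then show ?thesis using True by (simp add: mul_one_right)
qed

section \<open>The coproduct of the idempotents \<open>1\<^sub>c\<close>\<close>

definition splittings :: "(nat \<Rightarrow> nat) \<Rightarrow> ((nat \<Rightarrow> nat) \<times> (nat \<Rightarrow> nat)) set" where
  "splittings c = {s \<in> Z \<times> Z. vadd m n (fst s) (snd s) = c}"

lemma finite_splittings: "finite (splittings c)"
  using finite_Z by (auto simp: splittings_def intro: finite_subset[of _ "Z \<times> Z"])

lemma dc_I_support:
  "c \<in> Z \<Longrightarrow> dc (I c) y z \<noteq> 0 \<Longrightarrow> \<exists>a1\<in>Z. \<exists>a2\<in>Z. y = I a1 \<and> z = I a2"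
  using dc_deg deg_I deg_0_imp by (metis add_is_0)

lemma Dlv_I_expansion:
  assumes c: "c \<in> Z"
  shows "Dlv dc (vec_of (I c)) = (\<lambda>(x, y). \<Sum>s\<in>Z \<times> Z.
     smulv (dc (I c) (I (fst s)) (I (snd s))) (vec_of (I (fst s))) x * vec_of (I (snd s)) y)"
proof (rule ext, clarify)
  fix y z
  let ?t = "\<lambda>s. smulv (dc (I c) (I (fst s)) (I (snd s))) (vec_of (I (fst s))) y * vec_of (I (snd s)) z"
  show "Dlv dc (vec_of (I c)) (y, z) = sum ?t (Z \<times> Z)"
  proof (cases "\<exists>a1\<in>Z. \<exists>a2\<in>Z. y = I a1 \<and> z = I a2")
    case True
    then obtain a1 a2 where a: "a1 \<in> Z" "a2 \<in> Z" "y = I a1" "z = I a2" by blast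
    have "sum ?t (Z \<times> Z) = (\<Sum>s\<in>Z \<times> Z. if s = (a1, a2) then dc (I c) y z else 0)"
      by (rule sum.cong) (auto simp: a smulv_def vec_of_I_I split: if_splits)
    then show ?thesis using a finite_Z by (simp add: Dlv_vec_of)
  next
    case False
    then have "sum ?t (Z \<times> Z) = 0" by (intro sum.neutral) (auto simp: smulv_def vec_of_def)
    then show ?thesis using False dc_I_support[OF c] by (auto simp: Dlv_vec_of)
  qed
qed

lemma dc_I_nonzero:
  assumes c: "c \<in> Z" and a1: "a1 \<in> Z" and a2: "a2 \<in> Z" and nz: "dc (I c) (I a1) (I a2) \<noteq> 0"
  shows "vadd m n a1 a2 = c"
proof (rule vadd_eqI[OF a1 a2 c])
  fix k assume k: "k < m"
  let ?l = "\<lambda>s. dc (I c) (I (fst s)) (I (snd s))"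
  have "qq ^ c k * ?l (a1, a2) = Dlv dc (mul (vec_of (I c)) (hv k)) (I a1, I a2)"
    using c k by (simp add: I_mul_h Dlv_smulv Dlv_vec_of)
  also have "\<dots> = (\<Sum>s\<in>Z \<times> Z. mul (smulv (?l s) (vec_of (I (fst s)))) (hv k) (I a1)
                               * mul (vec_of (I (snd s))) (hv k) (I a2))"
    using k by (simp add: Dlv_mul Dlv_h Dlv_I_expansion[OF c] tmul_sum_tens finite_Z)
  also have "\<dots> = (\<Sum>s\<in>Z \<times> Z. if s = (a1, a2) then ?l (a1, a2) * qq ^ (a1 k + a2 k) else 0)"
  proof (rule sum.cong[OF refl])
    fix s assume "s \<in> Z \<times> Z"
    then show "mul (smulv (?l s) (vec_of (I (fst s)))) (hv k) (I a1) * mul (vec_of (I (snd s))) (hv k) (I a2)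
        = (if s = (a1, a2) then ?l (a1, a2) * qq ^ (a1 k + a2 k) else 0)"
      using a1 a2 k by (auto simp: mulv_smulv_left I_mul_h smulv_apply vec_of_I_I power_add split: if_splits)
  qed
  finally show "qq ^ c k = qq ^ (a1 k + a2 k)" using a1 a2 finite_Z nz by simp
qed

lemma sum_dc_I:
  assumes "a1 \<in> Z" "a2 \<in> Z"
  shows "(\<Sum>c\<in>Z. dc (I c) (I a1) (I a2)) = 1"
proof -
  have "(\<Sum>c\<in>Z. dc (I c) (I a1) (I a2)) = Dlv dc one (I a1, I a2)"
    unfolding onev_def by (simp add: Dlv_sum finite_Z Dlv_vec_of)
  then show ?thesis using assms by (simp add: Dlv_one tens_def onev_I)
qed

lemma dc_I:
  assumes c: "c \<in> Z"
  shows "dc (I c) y z = (if \<exists>a1\<in>Z. \<exists>a2\<in>Z. y = I a1 \<and> z = I a2 \<and> vadd m n a1 a2 = c then 1 else 0)"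
proof (cases "\<exists>a1\<in>Z. \<exists>a2\<in>Z. y = I a1 \<and> z = I a2")
  case True
  then obtain a1 a2 where a: "a1 \<in> Z" "a2 \<in> Z" "y = I a1" "z = I a2" by blast
  have "(\<Sum>c\<in>Z. dc (I c) (I a1) (I a2)) = dc (I (vadd m n a1 a2)) (I a1) (I a2)"
    using finite_Z vadd_in_Z dc_I_nonzero a by (intro sum.mono_neutral_right[of Z "{_}", simplified]) auto
  then have "dc (I (vadd m n a1 a2)) (I a1) (I a2) = 1" using sum_dc_I a by simp
  moreover have "(\<exists>b1\<in>Z. \<exists>b2\<in>Z. y = I b1 \<and> z = I b2 \<and> vadd m n b1 b2 = c) \<longleftrightarrow> vadd m n a1 a2 = c"
    using a I_inj by (auto simp: inj_on_def)
  ultimately show ?thesis using dc_I_nonzero[OF c a(1,2)] a by auto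
next
  case False
  then show ?thesis using dc_I_support[OF c, of y z] by auto
qed

lemma Dlv_I:
  assumes c: "c \<in> Z"
  shows "Dlv dc (vec_of (I c)) = (\<lambda>(x, y). \<Sum>s\<in>splittings c. vec_of (I (fst s)) x * vec_of (I (snd s)) y)"
proof (rule ext, clarify)
  fix y z
  show "Dlv dc (vec_of (I c)) (y, z) = (\<Sum>s\<in>splittings c. vec_of (I (fst s)) y * vec_of (I (snd s)) z)"
  proof (cases "\<exists>a1\<in>Z. \<exists>a2\<in>Z. y = I a1 \<and> z = I a2 \<and> vadd m n a1 a2 = c")
    case True
    then obtain a1 a2 where a: "a1 \<in> Z" "a2 \<in> Z" "y = I a1" "z = I a2" "vadd m n a1 a2 = c" by blast
    have "(\<Sum>s\<in>splittings c. vec_of (I (fst s)) y * vec_of (I (snd s)) z)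
        = (\<Sum>s\<in>splittings c. if s = (a1, a2) then 1 else 0)"
      by (rule sum.cong) (auto simp: splittings_def a vec_of_I_I split: if_splits)
    also have "\<dots> = 1" using a finite_splittings by (simp add: splittings_def)
    finally show ?thesis using True by (simp add: Dlv_vec_of dc_I[OF c])
  next
    case False
    then have "(\<Sum>s\<in>splittings c. vec_of (I (fst s)) y * vec_of (I (snd s)) z) = 0"
      by (intro sum.neutral) (auto simp: splittings_def vec_of_def)
    moreover have "dc (I c) y z = 0" using dc_I[OF c, of y z] False by simp
    ultimately show ?thesis by (simp add: Dlv_vec_of)
  qed
qed

section \<open>The coproduct of the basis elements \<open>1\<^sub>c e\<^sub>i\<close>\<close>

lemma I_mul_idem1_e:
  assumes b: "b \<in> Z" and i: "i < m" and k: "k < n"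
  shows "mul (vec_of (I b)) (mul (idem1 mu m n I q hv i k) (ev i))
     = (if b i = k then vec_of (E b i) else (\<lambda>_. 0))"
  using b i k by (simp add: I_mul_idem1 vec_of_E mulv_zero_left flip: mul_assoc)

lemma I_mul_sum_idem1_e:
  assumes b: "b \<in> Z" and i: "i < m"
  shows "mul (vec_of (I b)) (\<lambda>x. \<Sum>k\<in>{1..<n}. mul (idem1 mu m n I q hv i k) (ev i) x)
     = (if b i \<noteq> 0 then vec_of (E b i) else (\<lambda>_. 0))"
proof -
  have "mul (vec_of (I b)) (\<lambda>x. \<Sum>k\<in>{1..<n}. mul (idem1 mu m n I q hv i k) (ev i) x)
      = (\<lambda>z. \<Sum>k\<in>{1..<n}. mul (vec_of (I b)) (mul (idem1 mu m n I q hv i k) (ev i)) z)"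
    by (rule mulv_sum_right) simp
  also have "\<dots> = (\<lambda>z. \<Sum>k\<in>{1..<n}. if k = b i then vec_of (E b i) z else 0)"
    using b i by (intro ext sum.cong) (auto simp: I_mul_idem1_e)
  also have "\<dots> = (if b i \<noteq> 0 then vec_of (E b i) else (\<lambda>_. 0))"
    using b i by (auto simp: fun_eq_iff Zn_def)
  finally show ?thesis .
qed

text \<open>The three sums are the three summands of \<open>\<Delta>(e\<^sub>i)\<close>, multiplied by
  \<open>\<Delta>(1\<^sub>c) = \<Sum>\<^bsub>a+b=c\<^esub> 1\<^sub>a \<otimes> 1\<^sub>b\<close>.\<close>
lemma dc_E:
  assumes c: "c \<in> Z" and i: "i < m"
  shows "dc (E c i) y z =
      (\<Sum>s\<in>splittings c. vec_of (E (fst s) i) y * (binv_coeff i (snd s) * vec_of (I (snd s)) z))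
    + (\<Sum>s\<in>splittings c. vec_of (I (fst s)) y * (if snd s i \<noteq> 0 then vec_of (E (snd s) i) z else 0))
    + (\<Sum>s\<in>splittings c. (Hinv_coeff i (fst s) * vec_of (I (fst s)) y)
                           * (if snd s i = 0 then vec_of (E (snd s) i) z else 0))"
proof -
  have Z2: "fst s \<in> Z" "snd s \<in> Z" if "s \<in> splittings c" for s
    using that by (auto simp: splittings_def)
  have "dc (E c i) y z = Dlv dc (mul (vec_of (I c)) (ev i)) (y, z)"
    using c i by (simp add: Dlv_vec_of flip: vec_of_E)
  also have "\<dots> = tmul mu (Dlv dc (vec_of (I c))) (Dlv dc (ev i)) (y, z)"
    by (simp only: Dlv_mul)
  also have "\<dots> = (\<Sum>s\<in>splittings c. mul (vec_of (I (fst s))) (ev i) y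
                                      * mul (vec_of (I (snd s))) (binv m n cA d q I i) z)
     + (\<Sum>s\<in>splittings c. mul (vec_of (I (fst s))) one y
          * mul (vec_of (I (snd s))) (\<lambda>x. \<Sum>k\<in>{1..<n}. mul (idem1 mu m n I q hv i k) (ev i) x) z)
     + (\<Sum>s\<in>splittings c. mul (vec_of (I (fst s))) (Hinv mu m n cA d I hv i) y
          * mul (vec_of (I (snd s))) (mul (idem1 mu m n I q hv i 0) (ev i)) z)"
    using i by (simp add: Dlv_I[OF c] Dlv_e tmul_add3 tmul_sum_tens finite_splittings)
  also have "\<dots> =
      (\<Sum>s\<in>splittings c. vec_of (E (fst s) i) y * (binv_coeff i (snd s) * vec_of (I (snd s)) z))
    + (\<Sum>s\<in>splittings c. vec_of (I (fst s)) y * (if snd s i \<noteq> 0 then vec_of (E (snd s) i) z else 0))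
    + (\<Sum>s\<in>splittings c. (Hinv_coeff i (fst s) * vec_of (I (fst s)) y)
                           * (if snd s i = 0 then vec_of (E (snd s) i) z else 0))"
    apply (intro arg_cong2[where f = "(+)"] sum.cong refl)
    subgoal for s using Z2[of s] i by (simp add: vec_of_E I_mul_binv smulv_apply)
    subgoal for s using Z2[of s] i by (subst I_mul_sum_idem1_e) (simp_all add: mul_one_right)
    subgoal for s using Z2[of s] i n_pos by (simp add: I_mul_Hinv smulv_apply I_mul_idem1_e)
    done
  finally show ?thesis .
qed

lemma dc_E_I_E:
  assumes c: "c \<in> Z" and i: "i < m" and a: "a \<in> Z" and b: "b \<in> Z" and j: "j < m"
  shows "dc (E c i) (I a) (E b j)
    = (if j = i \<and> vadd m n a b = c then (if b i \<noteq> 0 then 1 else Hinv_coeff i a) else 0)"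
proof -
  have s1: "(\<Sum>s\<in>splittings c. vec_of (E (fst s) i) (I a) * (binv_coeff i (snd s) * vec_of (I (snd s)) (E b j))) = 0"
    using a i by (intro sum.neutral) (auto simp: splittings_def vec_of_E_I)
  have s2: "(\<Sum>s\<in>splittings c. vec_of (I (fst s)) (I a)
        * (if snd s i \<noteq> 0 then vec_of (E (snd s) i) (E b j) else 0))
      = (\<Sum>s\<in>splittings c. if s = (a, b) then (if j = i \<and> b i \<noteq> 0 then 1 else 0) else 0)"
    using a b i j by (intro sum.cong) (auto simp: splittings_def vec_of_I_I vec_of_E_E split: if_splits)
  have s3: "(\<Sum>s\<in>splittings c. (Hinv_coeff i (fst s) * vec_of (I (fst s)) (I a))
        * (if snd s i = 0 then vec_of (E (snd s) i) (E b j) else 0))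
      = (\<Sum>s\<in>splittings c. if s = (a, b) then (if j = i \<and> b i = 0 then Hinv_coeff i a else 0) else 0)"
    using a b i j by (intro sum.cong) (auto simp: splittings_def vec_of_I_I vec_of_E_E split: if_splits)
  have mem: "(a, b) \<in> splittings c \<longleftrightarrow> vadd m n a b = c"
    using a b by (simp add: splittings_def)
  show ?thesis
    unfolding dc_E[OF c i] s1 s2 s3 using finite_splittings[of c] mem by auto
qed

lemma dc_E_E_I:
  assumes c: "c \<in> Z" and i: "i < m" and a: "a \<in> Z" and b: "b \<in> Z" and j: "j < m"
  shows "dc (E c i) (E b j) (I a) = (if j = i \<and> vadd m n b a = c then binv_coeff i a else 0)"
proof -
  have s1: "(\<Sum>s\<in>splittings c. vec_of (E (fst s) i) (E b j) * (binv_coeff i (snd s) * vec_of (I (snd s)) (I a)))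
      = (\<Sum>s\<in>splittings c. if s = (b, a) then (if j = i then binv_coeff i a else 0) else 0)"
    using a b i j by (intro sum.cong) (auto simp: splittings_def vec_of_I_I vec_of_E_E split: if_splits)
  have s2: "(\<Sum>s\<in>splittings c. vec_of (I (fst s)) (E b j)
      * (if snd s i \<noteq> 0 then vec_of (E (snd s) i) (I a) else 0)) = 0"
    using b j by (intro sum.neutral) (auto simp: splittings_def vec_of_I_E)
  have s3: "(\<Sum>s\<in>splittings c. (Hinv_coeff i (fst s) * vec_of (I (fst s)) (E b j))
      * (if snd s i = 0 then vec_of (E (snd s) i) (I a) else 0)) = 0"
    using b j by (intro sum.neutral) (auto simp: splittings_def vec_of_I_E)
  have mem: "(b, a) \<in> splittings c \<longleftrightarrow> vadd m n b a = c"
    using a b by (simp add: splittings_def)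
  show ?thesis
    unfolding dc_E[OF c i] s1 s2 s3 using finite_splittings[of c] mem by auto
qed

lemma dc_I_E:
  assumes a: "a \<in> Z" and b: "b \<in> Z" and j: "j < m"
  shows "dc x (I a) (E b j) = (if b j \<noteq> 0 then 1 else Hinv_coeff j a) * vec_of (E (vadd m n a b) j) x"
proof (cases "\<exists>c\<in>Z. \<exists>i<m. x = E c i")
  case True
  then obtain c i where "c \<in> Z" "i < m" "x = E c i" by blast
  then show ?thesis
    using a b j vadd_in_Z by (auto simp: dc_E_I_E vec_of_E_E)
next
  case False
  then have "dc x (I a) (E b j) = 0"
    using dc_nonzero_imp_E deg_I[OF a] deg_E[OF b j] by fastforce
  moreover have "vec_of (E (vadd m n a b) j) x = (0 :: 'k)"
    using False vadd_in_Z j by (auto simp: vec_of_def)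
  ultimately show ?thesis by simp
qed

lemma dc_E_I:
  assumes a: "a \<in> Z" and b: "b \<in> Z" and j: "j < m"
  shows "dc x (E b j) (I a) = binv_coeff j a * vec_of (E (vadd m n b a) j) x"
proof (cases "\<exists>c\<in>Z. \<exists>i<m. x = E c i")
  case True
  then obtain c i where "c \<in> Z" "i < m" "x = E c i" by blast
  then show ?thesis
    using a b j vadd_in_Z by (auto simp: dc_E_E_I vec_of_E_E)
next
  case False
  then have "dc x (E b j) (I a) = 0"
    using dc_nonzero_imp_E deg_I[OF a] deg_E[OF b j] by fastforce
  moreover have "vec_of (E (vadd m n b a) j) x = (0 :: 'k)"
    using False vadd_in_Z j by (auto simp: vec_of_def)
  ultimately show ?thesis by simp
qed

section \<open>The elements \<open>\<Gamma>\<^sup>j\<^sub>\<chi>\<^sub>a\<close> of the dual\<close>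

lemma GamChi_eq_vec_of:
  assumes a: "a \<in> Z" and j: "j < m"
  shows "GamChi dc I E a j = vec_of (E (vadd m n a (eps j)) j)"
  using dc_I_E[OF a eps_in_Z[OF j] j]
  by (simp add: fun_eq_iff GamChi_def chi_def Gam_def Mprod_vec_of eps_def)

lemma MDelta_GamChi:
  assumes a: "a \<in> Z" and j: "j < m"
  shows "MDelta mu (GamChi dc I E a j) =
    (\<lambda>(y, z). chi I (vadd m n a (eps j)) y * GamChi dc I E a j z + GamChi dc I E a j y * chi I a z)"
proof (rule ext, clarify)
  fix y z
  define a' where "a' = vadd m n a (eps j)"
  have a': "a' \<in> Z" by (simp add: a'_def vadd_in_Z)
  have "MDelta mu (GamChi dc I E a j) (y, z) = mul (vec_of y) (vec_of z) (E a' j)"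
    by (simp add: GamChi_eq_vec_of[OF a j] MDelta_vec_of mulv_vec_of_vec_of a'_def)
  also have "\<dots> = vec_of (I a') y * vec_of (E a' j) z + vec_of (E a' j) y * vec_of (I a) z"
  proof (cases "deg y + deg z = 1")
    case True
    then consider "deg y = 0" "deg z = 1" | "deg y = 1" "deg z = 0" by linarith
    then show ?thesis
    proof cases
      case 1
      then obtain b c i where "b \<in> Z" "y = I b" "c \<in> Z" "i < m" "z = E c i"
        using deg_0_imp deg_1_imp by blast
      then show ?thesis
        using a a' j by (auto simp: I_mul_E vec_of_E_E vec_of_I_I vec_of_I_E vec_of_E_I)
    next
      case 2
      then obtain b c i where b: "b \<in> Z" "z = I b" and c: "c \<in> Z" "i < m" "y = E c i"
        using deg_0_imp deg_1_imp by blast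
      have "vadd m n b (eps j) = a' \<longleftrightarrow> b = a"
        using vadd_right_cancel[OF b(1) a] by (auto simp: a'_def)
      then show ?thesis
        using a a' b c j by (auto simp: E_mul_I vec_of_E_E vec_of_I_I vec_of_I_E vec_of_E_I)
    qed
  next
    case False
    then have "mul (vec_of y) (vec_of z) (E a' j) = 0"
      using mu_deg deg_E[OF a' j] by (force simp: mulv_vec_of_vec_of)
    moreover have "vec_of (I a') y * vec_of (E a' j) z = (0 :: 'k)"
      using False a' j by (auto simp: vec_of_def deg_I deg_E)
    moreover have "vec_of (E a' j) y * vec_of (I a) z = (0 :: 'k)"
      using False a a' j by (auto simp: vec_of_def deg_I deg_E)
    ultimately show ?thesis by (simp only: add_0)
  qed
  finally show "MDelta mu (GamChi dc I E a j) (y, z)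
      = chi I a' y * GamChi dc I E a j z + GamChi dc I E a j y * chi I a z"
    by (simp add: GamChi_eq_vec_of[OF a j] chi_def a'_def)
qed

text \<open>Here \<open>\<lfloor>(b\<^sub>j + 1)/n\<rfloor> = 1\<close> exactly when \<open>(b + \<epsilon>\<^sub>j)\<^sub>j = 0\<close>, the case in which
  \<open>\<Delta>(e\<^sub>j)\<close> contributes through \<open>H\<^sub>j\<^sup>-\<^sup>1\<close>; symmetry of \<open>c\<close> turns \<open>H\<^sub>j\<^sup>-\<^sup>1\<close> into the stated product.\<close>
lemma chi_mul_GamChi:
  assumes cc_sym: "\<And>i. i < m \<Longrightarrow> cc cA d i j = cc cA d j i"
    and a: "a \<in> Z" and b: "b \<in> Z" and j: "j < m"
  shows "Mprod dc (chi I a) (GamChi dc I E b j) =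
    (\<lambda>x. (\<Prod>i<m. qq powi (- cc cA d i j * int (a i) * int ((b j + 1) div n)))
         * GamChi dc I E (vadd m n a b) j x)"
proof -
  define b' where "b' = vadd m n b (eps j)"
  have b': "b' \<in> Z" by (simp add: b'_def vadd_in_Z)
  have b'_j: "b' j = (b j + 1) mod n" using j by (simp add: b'_def vadd_def eps_def)
  have bj: "b j < n" using b j by (simp add: Zn_def)
  have "(if b' j \<noteq> 0 then 1 else Hinv_coeff j a)
      = (\<Prod>i<m. qq powi (- cc cA d i j * int (a i) * int ((b j + 1) div n)))"
  proof (cases "b j + 1 < n")
    case True
    then show ?thesis using b'_j by simp
  next
    case False
    then have "b j + 1 = n" using bj by simp
    then show ?thesis
      using b'_j cc_sym n_pos by (simp add: Hinv_coeff_def)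
  qed
  moreover have "vadd m n a b' = vadd m n (vadd m n a b) (eps j)"
    by (simp add: b'_def vadd_assoc)
  ultimately show ?thesis
    using dc_I_E[OF a b' j]
    by (intro ext) (simp add: chi_def GamChi_eq_vec_of[OF b j] GamChi_eq_vec_of[OF vadd_in_Z j]
        Mprod_vec_of b'_def)
qed

lemma GamChi_mul_chi:
  assumes a: "a \<in> Z" and b: "b \<in> Z" and j: "j < m"
  shows "Mprod dc (GamChi dc I E b j) (chi I a) =
    (\<lambda>x. (\<Prod>i<m. q powi (cc cA d j i * int (a i))) * GamChi dc I E (vadd m n a b) j x)"
proof -
  define b' where "b' = vadd m n b (eps j)"
  have b': "b' \<in> Z" by (simp add: b'_def vadd_in_Z)
  have "vadd m n b' a = vadd m n (vadd m n a b) (eps j)"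
    unfolding b'_def by (metis vadd_assoc vadd_commute)
  then show ?thesis
    using dc_E_I[OF a b' j]
    by (intro ext) (simp add: chi_def GamChi_eq_vec_of[OF b j] GamChi_eq_vec_of[OF vadd_in_Z j]
        Mprod_vec_of binv_coeff_def b'_def)
qed

end

theorem lemma3p2:
  fixes q :: "'k::field_char_0"
    and deg :: "'b::finite \<Rightarrow> nat"
    and mu dc :: "'b \<Rightarrow> 'b \<Rightarrow> 'b \<Rightarrow> 'k"
    and I :: "(nat \<Rightarrow> nat) \<Rightarrow> 'b" and E :: "(nat \<Rightarrow> nat) \<Rightarrow> nat \<Rightarrow> 'b"
    and hv ev :: "nat \<Rightarrow> 'b \<Rightarrow> 'k"
    and m n :: nat and cA :: "nat \<Rightarrow> nat \<Rightarrow> int" and d :: "nat \<Rightarrow> nat"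
    and a b :: "nat \<Rightarrow> nat" and j :: nat
  assumes alg_closed: "\<forall>p :: 'k poly. 0 < degree p \<longrightarrow> (\<exists>z. poly p z = 0)"
    and cartan: "cartan_finite_type m cA d"
    and n2: "2 \<le> n"
    and prim: "primitive_root q (n ^ 2)"
    and A: "Aq_model m n cA d q deg mu dc I E hv ev"
    and j: "j < m"
    and a: "a \<in> Zn m n" and b: "b \<in> Zn m n"
  shows "(MDelta mu (GamChi dc I E a j) =
           (\<lambda>(y, z). chi I (vadd m n a (eps j)) y * GamChi dc I E a j z
                     + GamChi dc I E a j y * chi I a z)) \<and>
         (Mprod dc (chi I a) (GamChi dc I E b j) =
           (\<lambda>x. (\<Prod>i<m. (q ^ n) powi (- cc cA d i j * int (a i) * int ((b j + 1) div n)))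
                 * GamChi dc I E (vadd m n a b) j x)) \<and>
         (Mprod dc (GamChi dc I E b j) (chi I a) =
           (\<lambda>x. (\<Prod>i<m. q powi (cc cA d j i * int (a i))) * GamChi dc I E (vadd m n a b) j x))"
proof -
  interpret Aq_model_setting m n cA d q deg mu dc I E hv ev
    using Aq_model_setting_if_Aq_model[OF A n2 prim] .
  have cc_sym: "cc cA d i j = cc cA d j i" if "i < m" for i
    using cartan that j by (simp add: cartan_finite_type_def cc_def)
  show ?thesis
    using MDelta_GamChi[OF a j] chi_mul_GamChi[OF cc_sym a b j] GamChi_mul_chi[OF a b j] by blast
qed

end
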